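(* Let $T$ be a tree such that for every high degree vertex $v$ of $T$, at most one connected component of $T-v$ has more than one vertex. Then $T$ has at most two high degree vertices.
   Context: A high degree vertex (HDV) of a tree is a vertex of degree at least $3$. *)

theory Defs
  imports Main
begin

definition simple_graph :: "'a set \<Rightarrow> 'a set set \<Rightarrow> bool" where
  "simple_graph V E \<longleftrightarrow> finite V \<and>
     (\<forall>e\<in>E. \<exists>u v. e = {u, v} \<and> u \<noteq> v \<and> u \<in> V \<and> v \<in> V)"

definition adj :: "'a set set \<Rightarrow> 'a \<Rightarrow> 'a \<Rightarrow> bool" where
  "adj E u v \<longleftrightarrow> {u, v} \<in> E"

definition reach :: "'a set \<Rightarrow> 'a set set \<Rightarrow> 'a \<Rightarrow> 'a \<Rightarrow> bool" where
  "reach V E u v \<longleftrightarrow> (\<exists>xs. xs \<noteq> [] \<and> hd xs = u \<and> last xs = v \<and> set xs \<subseteq> V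
                              \<and> successively (adj E) xs)"

definition connected_graph :: "'a set \<Rightarrow> 'a set set \<Rightarrow> bool" where
  "connected_graph V E \<longleftrightarrow> V \<noteq> {} \<and> (\<forall>u\<in>V. \<forall>v\<in>V. reach V E u v)"

definition has_cycle :: "'a set \<Rightarrow> 'a set set \<Rightarrow> bool" where
  "has_cycle V E \<longleftrightarrow> (\<exists>xs. length xs \<ge> 3 \<and> distinct xs \<and> set xs \<subseteq> V
                          \<and> successively (adj E) xs \<and> adj E (last xs) (hd xs))"

definition is_tree :: "'a set \<Rightarrow> 'a set set \<Rightarrow> bool" where
  "is_tree V E \<longleftrightarrow> simple_graph V E \<and> connected_graph V E \<and> \<not> has_cycle V E"

definition degree :: "'a set set \<Rightarrow> 'a \<Rightarrow> nat" where
  "degree E v = card {u. {u, v} \<in> E}"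

definition hdv :: "'a set \<Rightarrow> 'a set set \<Rightarrow> 'a \<Rightarrow> bool" where
  "hdv V E v \<longleftrightarrow> v \<in> V \<and> degree E v \<ge> 3"

definition components :: "'a set \<Rightarrow> 'a set set \<Rightarrow> 'a set set" where
  "components V E = {{u \<in> V. reach V E w u} | w. w \<in> V}"

definition del_vertex_V :: "'a set \<Rightarrow> 'a \<Rightarrow> 'a set" where
  "del_vertex_V V v = V - {v}"

definition del_vertex_E :: "'a set set \<Rightarrow> 'a \<Rightarrow> 'a set set" where
  "del_vertex_E E v = {e \<in> E. v \<notin> e}"

end

theory Submission
  imports Defs
begin

text \<open>
  In a tree, two distinct neighbours w1, w2 of a vertex y lie in different components of
  T - y, since a path joining them outside y would close a cycle through y; and the component
  of w is nontrivial as soon as w has a neighbour other than y. Hence the hypothesis forbids a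
  high degree vertex y to have two disjoint paths leaving it whose far ends have degree at
  least 2: their second vertices are two such neighbours. Three high degree vertices a, b, c
  span a tripod, a centre y with pairwise disjoint paths to a, b and c. The centre has high
  degree, being either one of a, b, c or adjacent to three distinct vertices, and at least two
  of its three arms are nonempty paths ending in high degree vertices: a contradiction.
\<close>

lemma adj_sym: "adj E u v \<longleftrightarrow> adj E v u"
  by (simp add: adj_def insert_commute)

lemma simple_graph_adjD:
  assumes "simple_graph V E" "adj E u v"
  shows "u \<in> V" "v \<in> V" "u \<noteq> v"
  using assms unfolding simple_graph_def adj_def by (auto simp: doubleton_eq_iff)

lemma finite_adj:
  assumes "simple_graph V E"
  shows "finite {u. adj E v u}"
proof (rule finite_subset)
  show "{u. adj E v u} \<subseteq> V" using simple_graph_adjD(2)[OF assms] by blast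
  show "finite V" using assms by (simp add: simple_graph_def)
qed

lemma degree_eq_card_adj: "degree E v = card {u. adj E v u}"
  by (simp add: degree_def adj_def insert_commute)

lemma degree_ge_2_other_neighbour:
  assumes "2 \<le> degree E w"
  obtains u where "u \<noteq> y" "adj E w u"
proof -
  have "\<not> {u. adj E w u} \<subseteq> {y}"
    using card_mono[of "{y}" "{u. adj E w u}"] assms by (auto simp: degree_eq_card_adj)
  then show thesis using that by blast
qed

lemma successively_distinct_shortcut:
  assumes "successively R xs" "xs \<noteq> []"
  shows "\<exists>ys. distinct ys \<and> ys \<noteq> [] \<and> hd ys = hd xs \<and> last ys = last xs
              \<and> set ys \<subseteq> set xs \<and> successively R ys"
  using assms
proof (induction xs)
  case Nil
  then show ?case by simp
next
  case (Cons x xs)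
  show ?case
  proof (cases "xs = []")
    case True
    then show ?thesis by (intro exI[of _ "[x]"]) simp
  next
    case False
    with Cons obtain ys where ys: "distinct ys" "ys \<noteq> []" "hd ys = hd xs" "last ys = last xs"
        "set ys \<subseteq> set xs" "successively R ys"
      by (auto simp: successively_Cons)
    show ?thesis
    proof (cases "x \<in> set ys")
      case True
      then obtain us vs where "ys = us @ x # vs" by (meson split_list)
      with ys False show ?thesis
        by (intro exI[of _ "x # vs"]) (auto simp: successively_append_iff)
    next
      case False
      with ys Cons.prems \<open>xs \<noteq> []\<close> show ?thesis
        by (intro exI[of _ "x # ys"]) (auto simp: successively_Cons neq_Nil_conv)
    qed
  qed
qed

definition is_path :: "'a set set \<Rightarrow> 'a list \<Rightarrow> bool" where
  "is_path E xs \<longleftrightarrow> distinct xs \<and> successively (adj E) xs"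

lemma is_path_rev [simp]: "is_path E (rev xs) \<longleftrightarrow> is_path E xs"
  by (simp add: is_path_def adj_sym)

lemma is_path_appendD:
  "is_path E (xs @ ys) \<Longrightarrow> is_path E xs"
  "is_path E (xs @ ys) \<Longrightarrow> is_path E ys"
  by (auto simp: is_path_def successively_append_iff)

lemma reach_refl: "u \<in> V \<Longrightarrow> reach V E u u"
  unfolding reach_def by (intro exI[of _ "[u]"]) simp

lemma reach_adj: "u \<in> V \<Longrightarrow> v \<in> V \<Longrightarrow> adj E u v \<Longrightarrow> reach V E u v"
  unfolding reach_def by (intro exI[of _ "[u, v]"]) simp

lemma reach_imp_path:
  assumes "reach V E u v"
  obtains xs where "is_path E xs" "xs \<noteq> []" "hd xs = u" "last xs = v" "set xs \<subseteq> V"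
proof -
  obtain ws where "ws \<noteq> []" "hd ws = u" "last ws = v" "set ws \<subseteq> V" "successively (adj E) ws"
    using assms unfolding reach_def by blast
  with successively_distinct_shortcut[of "adj E" ws] show thesis
    using that unfolding is_path_def by blast
qed

lemma adj_del_vertex_E: "adj (del_vertex_E E y) u v \<longleftrightarrow> adj E u v \<and> u \<noteq> y \<and> v \<noteq> y"
  by (auto simp: adj_def del_vertex_E_def)

lemma simple_graph_del_vertex:
  "simple_graph V E \<Longrightarrow> simple_graph (del_vertex_V V y) (del_vertex_E E y)"
  unfolding simple_graph_def del_vertex_V_def del_vertex_E_def by fastforce

lemma components_subset_Pow: "components V E \<subseteq> Pow V"
  unfolding components_def by auto

lemma card_component_gt_1:
  assumes "simple_graph V E" "adj E w u"
  shows "1 < card {x \<in> V. reach V E w x}"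
proof -
  have "w \<in> V" "u \<in> V" "w \<noteq> u" using simple_graph_adjD[OF assms] by auto
  then have "{w, u} \<subseteq> {x \<in> V. reach V E w x}"
    using assms(2) by (auto intro: reach_refl reach_adj)
  moreover have "finite {x \<in> V. reach V E w x}"
    using assms(1) by (simp add: simple_graph_def)
  ultimately have "card {w, u} \<le> card {x \<in> V. reach V E w x}"
    by (rule card_mono[rotated])
  with \<open>w \<noteq> u\<close> show ?thesis by simp
qed

lemma not_reach_neighbours_del_vertex:
  assumes "simple_graph V E" "\<not> has_cycle V E"
    and "w1 \<noteq> w2" "adj E y w1" "adj E y w2"
  shows "\<not> reach (del_vertex_V V y) (del_vertex_E E y) w1 w2"
proof
  assume "reach (del_vertex_V V y) (del_vertex_E E y) w1 w2"
  then obtain xs where xs: "is_path (del_vertex_E E y) xs" "xs \<noteq> []" "hd xs = w1" "last xs = w2"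
      "set xs \<subseteq> del_vertex_V V y"
    by (rule reach_imp_path)
  then obtain v vs where "xs = w1 # v # vs"
    using assms(3) by (metis last_ConsL list.collapse)
  have "successively (adj E) xs"
    using xs(1) by (auto simp: is_path_def adj_del_vertex_E intro: successively_mono)
  moreover have "y \<in> V" using simple_graph_adjD[OF assms(1,4)] by simp
  ultimately have "has_cycle V E"
    unfolding has_cycle_def using xs assms(4,5) \<open>xs = w1 # v # vs\<close>
    by (intro exI[of _ "y # xs"]) (auto simp: is_path_def del_vertex_V_def adj_sym)
  with assms(2) show False ..
qed

lemma two_nontrivial_components:
  assumes "simple_graph V E" "\<not> has_cycle V E"
    and "w1 \<noteq> w2" "adj E y w1" "adj E y w2"
    and "u1 \<noteq> y" "adj E w1 u1" "u2 \<noteq> y" "adj E w2 u2"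
  shows "2 \<le> card {C \<in> components (del_vertex_V V y) (del_vertex_E E y). 1 < card C}"
proof -
  define V' E' where "V' = del_vertex_V V y" and "E' = del_vertex_E E y"
  define C where "C w = {x \<in> V'. reach V' E' w x}" for w
  have simple': "simple_graph V' E'"
    unfolding V'_def E'_def using assms(1) by (rule simple_graph_del_vertex)
  have "w1 \<in> V" "w2 \<in> V" "w1 \<noteq> y" "w2 \<noteq> y"
    using simple_graph_adjD[OF assms(1)] assms(4,5) by metis+
  then have "w1 \<in> V'" "w2 \<in> V'" by (auto simp: V'_def del_vertex_V_def)
  then have comp: "C w1 \<in> components V' E'" "C w2 \<in> components V' E'"
    unfolding components_def C_def by auto
  have "adj E' w1 u1" "adj E' w2 u2"
    using assms(6-9) \<open>w1 \<noteq> y\<close> \<open>w2 \<noteq> y\<close> by (auto simp: E'_def adj_del_vertex_E)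
  then have big: "1 < card (C w1)" "1 < card (C w2)"
    unfolding C_def using card_component_gt_1[OF simple'] by auto
  have "w2 \<in> C w2" "w2 \<notin> C w1"
    using \<open>w2 \<in> V'\<close> reach_refl not_reach_neighbours_del_vertex[OF assms(1-5)]
    by (auto simp: C_def V'_def E'_def)
  then have "C w1 \<noteq> C w2" by blast
  have "finite (components V' E')"
    using simple' by (simp add: simple_graph_def finite_subset[OF components_subset_Pow])
  then have "card {C w1, C w2} \<le> card {C \<in> components V' E'. 1 < card C}"
    using comp big by (intro card_mono) simp_all
  moreover have "card {C w1, C w2} = 2" using \<open>C w1 \<noteq> C w2\<close> by simp
  ultimately show ?thesis unfolding V'_def E'_def by simp
qed

lemma path_second_vertex_other_neighbour:
  assumes "is_path E (y # zs)" "zs \<noteq> []" "2 \<le> degree E (last zs)"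
  obtains u where "u \<noteq> y" "adj E (hd zs) u"
proof -
  obtain w ws where zs: "zs = w # ws" using assms(2) by (meson neq_Nil_conv)
  show thesis
  proof (cases ws)
    case Nil
    then have "2 \<le> degree E w" using assms(3) zs by simp
    then obtain u where "u \<noteq> y" "adj E w u" by (rule degree_ge_2_other_neighbour)
    then show thesis using that zs by simp
  next
    case (Cons w' ws')
    then have "w' \<noteq> y" "adj E w w'" using assms(1) zs by (auto simp: is_path_def)
    then show thesis using that zs by simp
  qed
qed

lemma is_path_adj_hd:
  "is_path E (y # zs) \<Longrightarrow> zs \<noteq> [] \<Longrightarrow> adj E y (hd zs)"
  by (cases zs) (auto simp: is_path_def)

lemma two_nontrivial_components_of_paths:
  assumes "simple_graph V E" "\<not> has_cycle V E"
    and "is_path E (y # ps)" "is_path E (y # qs)" "ps \<noteq> []" "qs \<noteq> []" "set ps \<inter> set qs = {}"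
    and "2 \<le> degree E (last ps)" "2 \<le> degree E (last qs)"
  shows "2 \<le> card {C \<in> components (del_vertex_V V y) (del_vertex_E E y). 1 < card C}"
proof -
  obtain u1 where u1: "u1 \<noteq> y" "adj E (hd ps) u1"
    by (rule path_second_vertex_other_neighbour[OF assms(3,5,8)])
  obtain u2 where u2: "u2 \<noteq> y" "adj E (hd qs) u2"
    by (rule path_second_vertex_other_neighbour[OF assms(4,6,9)])
  have "hd ps \<in> set ps" "hd qs \<in> set qs" using assms(5,6) by simp_all
  with assms(7) have "hd ps \<noteq> hd qs" by (metis IntI empty_iff)
  then show ?thesis
    using is_path_adj_hd[OF assms(3,5)] is_path_adj_hd[OF assms(4,6)] u1 u2
    by (rule two_nontrivial_components[OF assms(1,2)])
qed

lemma hdv_if_three_disjoint_paths: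
  assumes "simple_graph V E"
    and "is_path E (y # ps)" "is_path E (y # qs)" "is_path E (y # rs)"
    and "ps \<noteq> []" "qs \<noteq> []" "rs \<noteq> []"
    and "set ps \<inter> set qs = {}" "set ps \<inter> set rs = {}" "set qs \<inter> set rs = {}"
  shows "hdv V E y"
proof -
  have nbs: "{hd ps, hd qs, hd rs} \<subseteq> {u. adj E y u}"
    using is_path_adj_hd[OF assms(2,5)] is_path_adj_hd[OF assms(3,6)] is_path_adj_hd[OF assms(4,7)]
    by simp
  have "hd ps \<in> set ps" "hd qs \<in> set qs" "hd rs \<in> set rs"
    using assms(5-7) by simp_all
  then have "hd ps \<noteq> hd qs" "hd ps \<noteq> hd rs" "hd qs \<noteq> hd rs"
    using assms(8-10) by (metis IntI empty_iff)+
  then have "3 = card {hd ps, hd qs, hd rs}" by simp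
  also have "\<dots> \<le> degree E y"
    unfolding degree_eq_card_adj using finite_adj[OF assms(1)] nbs by (rule card_mono)
  finally have "3 \<le> degree E y" .
  moreover have "y \<in> V"
    using nbs simple_graph_adjD(1)[OF assms(1)] by blast
  ultimately show ?thesis by (simp add: hdv_def)
qed

lemma hdv_tripod_centre:
  assumes "simple_graph V E"
    and "is_path E (y # ps)" "is_path E (y # qs)" "is_path E (y # rs)"
    and "set ps \<inter> set qs = {}" "set ps \<inter> set rs = {}" "set qs \<inter> set rs = {}"
    and "hdv V E (last (y # ps))" "hdv V E (last (y # qs))" "hdv V E (last (y # rs))"
  shows "hdv V E y"
proof (cases "ps = [] \<or> qs = [] \<or> rs = []")
  case True
  then show ?thesis using assms(8-10) by auto
next
  case False
  then show ?thesis using hdv_if_three_disjoint_paths[OF assms(1-4)] assms(5-7) by simp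
qed

lemma connected_graph_tripod:
  assumes "connected_graph V E" "a \<in> V" "b \<in> V" "c \<in> V"
  obtains y ps qs rs where
    "is_path E (y # ps)" "is_path E (y # qs)" "is_path E (y # rs)"
    "last (y # ps) = a" "last (y # qs) = b" "last (y # rs) = c"
    "set ps \<inter> set qs = {}" "set ps \<inter> set rs = {}" "set qs \<inter> set rs = {}"
proof -
  obtain P where P: "is_path E P" "P \<noteq> []" "hd P = a" "last P = b"
    using assms by (metis connected_graph_def reach_imp_path)
  obtain W where W: "is_path E W" "W \<noteq> []" "hd W = c" "last W = a"
    using assms by (metis connected_graph_def reach_imp_path)
  \<comment> \<open>the centre: the first vertex of the path from c to a that lies on the path from a to b\<close>
  have "\<exists>x \<in> set W. x \<in> set P" using P W by (metis hd_in_set last_in_set)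
  then obtain ws y ws' where W_split: "W = ws @ y # ws'" "y \<in> set P" "\<forall>x \<in> set ws. x \<notin> set P"
    by (rule split_list_first_propE)
  obtain p1 p2 where P_split: "P = p1 @ y # p2" using W_split(2) by (meson split_list)
  have "is_path E (p1 @ [y])" "is_path E (y # p2)" "is_path E (ws @ [y])"
    using P(1) W(1) P_split W_split(1) is_path_appendD[of E "p1 @ [y]" p2]
      is_path_appendD[of E p1 "y # p2"] is_path_appendD[of E "ws @ [y]" ws'] by auto
  then have paths: "is_path E (y # rev p1)" "is_path E (y # p2)" "is_path E (y # rev ws)"
    using is_path_rev[of E "p1 @ [y]"] is_path_rev[of E "ws @ [y]"] by auto
  have "last (y # rev p1) = a" using P(3) P_split by (cases p1) auto
  moreover have "last (y # p2) = b" using P(4) P_split by simp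
  moreover have "last (y # rev ws) = c" using W(3) W_split(1) by (cases ws) auto
  moreover have "set (rev p1) \<inter> set p2 = {}" using P(1) P_split by (auto simp: is_path_def)
  moreover have "set (rev p1) \<inter> set (rev ws) = {}" "set p2 \<inter> set (rev ws) = {}"
    using W_split(3) P_split by auto
  ultimately show thesis using that paths by (metis inf_commute)
qed

theorem lemma2p2:
  fixes V :: "'a set" and E :: "'a set set"
  assumes "is_tree V E"
    and "\<forall>v. hdv V E v \<longrightarrow>
           card {C \<in> components (del_vertex_V V v) (del_vertex_E E v). card C > 1} \<le> 1"
  shows "card {v. hdv V E v} \<le> 2"
proof (rule ccontr)
  assume "\<not> card {v. hdv V E v} \<le> 2"
  then obtain T where "T \<subseteq> {v. hdv V E v}" "card T = 3"
    using obtain_subset_with_card_n[of 3 "{v. hdv V E v}"] by auto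
  then obtain a b c where hdv: "hdv V E a" "hdv V E b" "hdv V E c" and "a \<noteq> b" "a \<noteq> c" "b \<noteq> c"
    unfolding card_3_iff by auto
  have simple: "simple_graph V E" and acyclic: "\<not> has_cycle V E" and conn: "connected_graph V E"
    using assms(1) by (simp_all add: is_tree_def)
  obtain y ps qs rs where paths: "is_path E (y # ps)" "is_path E (y # qs)" "is_path E (y # rs)"
    and ends: "last (y # ps) = a" "last (y # qs) = b" "last (y # rs) = c"
    and disjoint: "set ps \<inter> set qs = {}" "set ps \<inter> set rs = {}" "set qs \<inter> set rs = {}"
    using connected_graph_tripod[OF conn] hdv by (metis hdv_def)
  have "hdv V E y"
    using hdv_tripod_centre[OF simple paths disjoint] ends hdv by simp
  then have "card {C \<in> components (del_vertex_V V y) (del_vertex_E E y). 1 < card C} \<le> 1"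
    using assms(2) by simp
  moreover have "ps \<noteq> [] \<and> qs \<noteq> [] \<or> ps \<noteq> [] \<and> rs \<noteq> [] \<or> qs \<noteq> [] \<and> rs \<noteq> []"
    using ends \<open>a \<noteq> b\<close> \<open>a \<noteq> c\<close> \<open>b \<noteq> c\<close> by auto
  then obtain xs zs where arms: "(xs, zs) \<in> {(ps, qs), (ps, rs), (qs, rs)}" "xs \<noteq> []" "zs \<noteq> []"
    by blast
  have "is_path E (y # xs)" "is_path E (y # zs)" "set xs \<inter> set zs = {}"
      "2 \<le> degree E (last xs)" "2 \<le> degree E (last zs)"
    using arms paths ends disjoint hdv by (auto simp: hdv_def)
  then have "2 \<le> card {C \<in> components (del_vertex_V V y) (del_vertex_E E y). 1 < card C}"
    using two_nontrivial_components_of_paths[OF simple acyclic] arms(2,3) by blast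
  ultimately show False by simp
qed

end
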